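(* Let $n=1$ and let $\mathbb{T}$ be a radical tower over $\mathbb{C}(t)$ such that its tower variety $\mathcal{V}_\mathbb{T}$ is a rational curve. Then for any radical parametrization $\mathcal{P}$ whose entries lie in the last field of $\mathbb{T}$, the radical variety $\mathcal{V}_\mathcal{P}$ is a rational curve.
   Context: A radical tower $\mathbb{T}$ over $\mathbb{C}(t)$ is a tower of fields $\mathbb{F}_0=\mathbb{C}(t)\subseteq\dots\subseteq\mathbb{F}_m$ with $\mathbb{F}_i=\mathbb{F}_{i-1}(\delta_i)$, $\delta_i^{e_i}=\alpha_i\in\mathbb{F}_{i-1}$, $e_i\in\mathbb{N}$, where the $\delta_i$ are realized as analytic functions $\delta_i(t)$ by fixing branch values at some point. A radical parametrization is a tuple $\overline{x}=(x_1,\dots,x_r)$, $r>1$, of elements of $\mathbb{F}_m$ whose derivative with respect to $t$ (derivation extended to $\mathbb{F}_m$) is nonzero (Jacobian of rank $1$). The tower variety is $\mathcal{V}_\mathbb{T}=\overline{\{(t,\delta_1(t),\dots,\delta_m(t))\}}\subset\mathbb{C}^{1+m}$ (Zariski closure of the image of $t\mapsto(t,\overline{\delta}(t))$). The radical variety $\mathcal{V}_\mathcal{P}\subset\mathbb{C}^r$ is the Zariski closure of the image $\{\overline{x}(t)\}$. *)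

theory Defs
  imports "HOL-Complex_Analysis.Complex_Analysis" "HOL-Computational_Algebra.Polynomial"
begin

text \<open>Points of affine space C^N are encoded as functions nat => complex whose
  coordinates with index >= N are zero.  Polynomial functions over C in the
  variables with index < N:\<close>
inductive_set polyfun :: "nat \<Rightarrow> ((nat \<Rightarrow> complex) \<Rightarrow> complex) set" for N :: nat where
  pf_const: "(\<lambda>x. c) \<in> polyfun N"
| pf_var: "j < N \<Longrightarrow> (\<lambda>x. x j) \<in> polyfun N"
| pf_add: "p \<in> polyfun N \<Longrightarrow> q \<in> polyfun N \<Longrightarrow> (\<lambda>x. p x + q x) \<in> polyfun N"
| pf_mult: "p \<in> polyfun N \<Longrightarrow> q \<in> polyfun N \<Longrightarrow> (\<lambda>x. p x * q x) \<in> polyfun N"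

definition zariski_closure :: "nat \<Rightarrow> (nat \<Rightarrow> complex) set \<Rightarrow> (nat \<Rightarrow> complex) set" where
  "zariski_closure N S = {x. (\<forall>j\<ge>N. x j = 0) \<and>
      (\<forall>p\<in>polyfun N. (\<forall>s\<in>S. p s = 0) \<longrightarrow> p x = 0)}"

definition rational_curve :: "nat \<Rightarrow> (nat \<Rightarrow> complex) set \<Rightarrow> bool" where
  "rational_curve N V \<longleftrightarrow>
     (\<exists>(num :: nat \<Rightarrow> complex poly) (den :: complex poly).
        den \<noteq> 0 \<and>
        (\<exists>j<N. \<exists>s1 s2. poly den s1 \<noteq> 0 \<and> poly den s2 \<noteq> 0 \<and>
            poly (num j) s1 / poly den s1 \<noteq> poly (num j) s2 / poly den s2) \<and>
        V = zariski_closure N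
              {(\<lambda>j. if j < N then poly (num j) s / poly den s else 0) | s. poly den s \<noteq> 0})"

definition tower_point :: "nat \<Rightarrow> (nat \<Rightarrow> complex \<Rightarrow> complex) \<Rightarrow> complex \<Rightarrow> (nat \<Rightarrow> complex)" where
  "tower_point m \<delta> t = (\<lambda>k. if k = 0 then t else if k \<le> m then \<delta> k t else 0)"

text \<open>Radical tower over C(t) with m radicals, realized as analytic functions
  delta_1, ..., delta_m on the connected open set U:
  delta_i ^ e_i = alpha_i with alpha_i in F_{i-1} = C(t)(delta_1,...,delta_{i-1}),
  i.e. alpha_i = A/B with A, B polynomials in t, delta_1, ..., delta_{i-1} and
  B(t, delta(t)) not identically zero on U.\<close>
definition radical_tower ::
  "complex set \<Rightarrow> nat \<Rightarrow> (nat \<Rightarrow> complex \<Rightarrow> complex) \<Rightarrow> (nat \<Rightarrow> nat) \<Rightarrow> bool" where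
  "radical_tower U m \<delta> e \<longleftrightarrow>
     open U \<and> connected U \<and> U \<noteq> {} \<and>
     (\<forall>i\<in>{1..m}. \<delta> i holomorphic_on U \<and> e i > 0 \<and>
        (\<exists>A\<in>polyfun i. \<exists>B\<in>polyfun i.
            (\<exists>t\<in>U. B (tower_point m \<delta> t) \<noteq> 0) \<and>
            (\<forall>t\<in>U. \<delta> i t ^ e i * B (tower_point m \<delta> t) = A (tower_point m \<delta> t))))"

definition tower_variety :: "complex set \<Rightarrow> nat \<Rightarrow> (nat \<Rightarrow> complex \<Rightarrow> complex) \<Rightarrow> (nat \<Rightarrow> complex) set" where
  "tower_variety U m \<delta> = zariski_closure (Suc m) (tower_point m \<delta> ` U)"

definition param_entry ::
  "nat \<Rightarrow> (nat \<Rightarrow> complex \<Rightarrow> complex) \<Rightarrow> (nat \<Rightarrow> (nat \<Rightarrow> complex) \<Rightarrow> complex)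
     \<Rightarrow> (nat \<Rightarrow> (nat \<Rightarrow> complex) \<Rightarrow> complex) \<Rightarrow> nat \<Rightarrow> complex \<Rightarrow> complex" where
  "param_entry m \<delta> P Q j t = P j (tower_point m \<delta> t) / Q j (tower_point m \<delta> t)"

text \<open>Radical parametrization (x_0,...,x_{r-1}), r > 1, entries in F_m,
  with nonzero derivative (Jacobian of rank 1).\<close>
definition radical_param ::
  "complex set \<Rightarrow> nat \<Rightarrow> (nat \<Rightarrow> complex \<Rightarrow> complex) \<Rightarrow> nat
     \<Rightarrow> (nat \<Rightarrow> (nat \<Rightarrow> complex) \<Rightarrow> complex) \<Rightarrow> (nat \<Rightarrow> (nat \<Rightarrow> complex) \<Rightarrow> complex) \<Rightarrow> bool" where
  "radical_param U m \<delta> r P Q \<longleftrightarrow>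
     r > 1 \<and>
     (\<forall>j<r. P j \<in> polyfun (Suc m) \<and> Q j \<in> polyfun (Suc m) \<and>
            (\<exists>t\<in>U. Q j (tower_point m \<delta> t) \<noteq> 0)) \<and>
     (\<exists>j<r. \<exists>t\<in>U. Q j (tower_point m \<delta> t) \<noteq> 0 \<and> deriv (param_entry m \<delta> P Q j) t \<noteq> 0)"

definition radical_variety ::
  "complex set \<Rightarrow> nat \<Rightarrow> (nat \<Rightarrow> complex \<Rightarrow> complex) \<Rightarrow> nat
     \<Rightarrow> (nat \<Rightarrow> (nat \<Rightarrow> complex) \<Rightarrow> complex) \<Rightarrow> (nat \<Rightarrow> (nat \<Rightarrow> complex) \<Rightarrow> complex) \<Rightarrow> (nat \<Rightarrow> complex) set" where
  "radical_variety U m \<delta> r P Q = zariski_closure r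
     {(\<lambda>j. if j < r then param_entry m \<delta> P Q j t else 0) | t.
        t \<in> U \<and> (\<forall>j<r. Q j (tower_point m \<delta> t) \<noteq> 0)}"

end

theory Submission
  imports Defs
begin

text \<open>The tower points \<open>(t, \<delta>(t))\<close> and the points of the rational parametrization of
  the tower variety are annihilated by the same polynomials. The entries of the radical
  parametrization are quotients \<open>P j / Q j\<close> of polynomials in these points, and clearing
  denominators shows that their images under \<open>P / Q\<close> are again annihilated by the same
  polynomials; composing \<open>P / Q\<close> with the rational parametrization therefore parametrizes
  the radical variety. The composite is non-constant because an entry with non-zero
  derivative cannot be constant on the open set where all denominators are non-zero,
  by the identity theorem.\<close>

definition rat_curve_point :: "nat \<Rightarrow> (nat \<Rightarrow> complex poly) \<Rightarrow> complex poly \<Rightarrow> complex \<Rightarrow> (nat \<Rightarrow> complex)" where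
  "rat_curve_point N num den s = (\<lambda>j. if j < N then poly (num j) s / poly den s else 0)"

definition quotient_point ::
  "nat \<Rightarrow> (nat \<Rightarrow> 'a \<Rightarrow> complex) \<Rightarrow> (nat \<Rightarrow> 'a \<Rightarrow> complex) \<Rightarrow> 'a \<Rightarrow> (nat \<Rightarrow> complex)" where
  "quotient_point r P Q w = (\<lambda>j. if j < r then P j w / Q j w else 0)"

lemma polyfun_prod:
  assumes "\<And>i. i \<in> I \<Longrightarrow> f i \<in> polyfun N"
  shows "(\<lambda>x. \<Prod>i\<in>I. f i x) \<in> polyfun N"
  using assms
proof (induction I rule: infinite_finite_induct)
  case (insert i I)
  then show ?case using polyfun.pf_mult[of "f i" N] by simp
qed (auto intro: polyfun.pf_const)

lemma polyfun_diff:
  assumes "p \<in> polyfun N" "q \<in> polyfun N"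
  shows "(\<lambda>x. p x - q x) \<in> polyfun N"
  using polyfun.pf_add[OF assms(1) polyfun.pf_mult[OF polyfun.pf_const[of "-1"] assms(2)]]
  by simp

lemma polyfun_holomorphic_on:
  assumes "p \<in> polyfun N" "\<And>j. j < N \<Longrightarrow> (\<lambda>t. X t j) holomorphic_on U"
  shows "(\<lambda>t. p (X t)) holomorphic_on U"
  using assms by induction (auto intro!: holomorphic_intros)

lemma polyfun_subst_common_denominator:
  fixes R :: "('a \<Rightarrow> complex) set"
  assumes const: "\<And>c. (\<lambda>_. c) \<in> R"
    and add: "\<And>f g. f \<in> R \<Longrightarrow> g \<in> R \<Longrightarrow> (\<lambda>x. f x + g x) \<in> R"
    and mult: "\<And>f g. f \<in> R \<Longrightarrow> g \<in> R \<Longrightarrow> (\<lambda>x. f x * g x) \<in> R"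
    and a: "\<And>j. j < N \<Longrightarrow> a j \<in> R" and d: "d \<in> R" and p: "p \<in> polyfun N"
  shows "\<exists>h\<in>R. \<exists>k. \<forall>x. d x \<noteq> 0 \<longrightarrow> p (\<lambda>j. if j < N then a j x / d x else 0) = h x / d x ^ k"
  using p
proof induction
  case (pf_const c)
  show ?case using const[of c] by (intro bexI[where x="\<lambda>_. c"] exI[where x=0]) auto
next
  case (pf_var j)
  show ?case using a[OF pf_var] pf_var by (intro bexI[where x="a j"] exI[where x=1]) auto
next
  case (pf_add p q)
  then obtain h1 k1 h2 k2 where h1: "h1 \<in> R" "\<forall>x. d x \<noteq> 0 \<longrightarrow>
      p (\<lambda>j. if j < N then a j x / d x else 0) = h1 x / d x ^ k1"
    and h2: "h2 \<in> R" "\<forall>x. d x \<noteq> 0 \<longrightarrow> q (\<lambda>j. if j < N then a j x / d x else 0) = h2 x / d x ^ k2"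
    by blast
  have pow: "(\<lambda>x. d x ^ k) \<in> R" for k
    by (induction k) (use const mult[OF d] in auto)
  show ?case
    using h1 h2 add[OF mult[OF h1(1) pow] mult[OF h2(1) pow]]
    by (intro bexI[where x="\<lambda>x. h1 x * d x ^ k2 + h2 x * d x ^ k1"] exI[where x="k1 + k2"])
      (auto simp: power_add field_simps)
next
  case (pf_mult p q)
  then obtain h1 k1 h2 k2 where h1: "h1 \<in> R" "\<forall>x. d x \<noteq> 0 \<longrightarrow>
      p (\<lambda>j. if j < N then a j x / d x else 0) = h1 x / d x ^ k1"
    and h2: "h2 \<in> R" "\<forall>x. d x \<noteq> 0 \<longrightarrow> q (\<lambda>j. if j < N then a j x / d x else 0) = h2 x / d x ^ k2"
    by blast
  show ?case
    using h1 h2 mult[OF h1(1) h2(1)]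
    by (intro bexI[where x="\<lambda>x. h1 x * h2 x"] exI[where x="k1 + k2"]) (auto simp: power_add)
qed

lemma polyfun_of_quotient_point:
  assumes "\<And>j. j < r \<Longrightarrow> P j \<in> polyfun M" "\<And>j. j < r \<Longrightarrow> Q j \<in> polyfun M"
    and "g \<in> polyfun r"
  obtains h k where "h \<in> polyfun M"
    "\<And>w. (\<forall>j<r. Q j w \<noteq> 0) \<Longrightarrow> g (quotient_point r P Q w) = h w / (\<Prod>j<r. Q j w) ^ k"
proof -
  define a where "a j w = P j w * (\<Prod>i\<in>{..<r} - {j}. Q i w)" for j w
  have quotient: "quotient_point r P Q w = (\<lambda>j. if j < r then a j w / (\<Prod>i<r. Q i w) else 0)"
    if "\<forall>j<r. Q j w \<noteq> 0" for w
    using that by (auto simp: quotient_point_def a_def prod.remove[of "{..<r}"])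
  have "\<exists>h\<in>polyfun M. \<exists>k. \<forall>w. (\<Prod>i<r. Q i w) \<noteq> 0 \<longrightarrow>
      g (\<lambda>j. if j < r then a j w / (\<Prod>i<r. Q i w) else 0) = h w / (\<Prod>i<r. Q i w) ^ k"
    by (rule polyfun_subst_common_denominator[OF polyfun.pf_const polyfun.pf_add polyfun.pf_mult])
      (use assms in \<open>auto simp: a_def intro!: polyfun.pf_mult polyfun_prod\<close>)
  then obtain h k where "h \<in> polyfun M" and h: "\<forall>w. (\<Prod>i<r. Q i w) \<noteq> 0 \<longrightarrow>
      g (\<lambda>j. if j < r then a j w / (\<Prod>i<r. Q i w) else 0) = h w / (\<Prod>i<r. Q i w) ^ k"
    by blast
  moreover have "g (quotient_point r P Q w) = h w / (\<Prod>j<r. Q j w) ^ k" if "\<forall>j<r. Q j w \<noteq> 0" for w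
    using h[rule_format, of w] quotient[OF that] that by simp
  ultimately show ?thesis using that by blast
qed

lemma polyfun_of_rat_curve_point:
  assumes "p \<in> polyfun N"
  obtains pp k where "\<And>s. poly den s \<noteq> 0 \<Longrightarrow> p (rat_curve_point N num den s) = poly pp s / poly den s ^ k"
proof -
  have "\<exists>h\<in>range poly. \<exists>k. \<forall>s. poly den s \<noteq> 0 \<longrightarrow>
      p (\<lambda>j. if j < N then poly (num j) s / poly den s else 0) = h s / poly den s ^ k"
  proof (rule polyfun_subst_common_denominator[OF _ _ _ _ _ assms])
    show "(\<lambda>_. c) \<in> range poly" for c by (rule range_eqI[where x="[:c:]"]) auto
    show "(\<lambda>s. f s + g s) \<in> range poly" if "f \<in> range poly" "g \<in> range poly" for f g
      using that by (auto simp flip: poly_add)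
    show "(\<lambda>s. f s * g s) \<in> range poly" if "f \<in> range poly" "g \<in> range poly" for f g
      using that by (auto simp flip: poly_mult)
  qed auto
  then show ?thesis using that by (auto simp: rat_curve_point_def)
qed

lemma poly_common_denominator:
  fixes a b :: "nat \<Rightarrow> 'a::field poly"
  obtains num den where "\<And>s. poly den s \<noteq> 0 \<longleftrightarrow> poly c s \<noteq> 0 \<and> (\<forall>j<r. poly (b j) s \<noteq> 0)"
    "\<And>s j. poly den s \<noteq> 0 \<Longrightarrow> j < r \<Longrightarrow> poly (num j) s / poly den s = poly (a j) s / poly (b j) s"
proof
  define den where "den = c * (\<Prod>i<r. b i)"
  show "poly den s \<noteq> 0 \<longleftrightarrow> poly c s \<noteq> 0 \<and> (\<forall>j<r. poly (b j) s \<noteq> 0)" for s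
    by (auto simp: den_def poly_prod)
  show "poly (c * a j * (\<Prod>i\<in>{..<r} - {j}. b i)) s / poly den s = poly (a j) s / poly (b j) s"
    if "poly den s \<noteq> 0" "j < r" for s j
    using that by (simp add: den_def poly_prod prod.remove[of "{..<r}" j])
qed

lemma quotient_point_rat_curve_image:
  assumes P: "\<And>j. j < r \<Longrightarrow> P j \<in> polyfun N" and Q: "\<And>j. j < r \<Longrightarrow> Q j \<in> polyfun N"
  obtains num' den' where
    "quotient_point r P Q ` {w \<in> rat_curve_point N num den ` {s. poly den s \<noteq> 0}. \<forall>j<r. Q j w \<noteq> 0}
       = rat_curve_point r num' den' ` {s. poly den' s \<noteq> 0}"
proof -
  let ?\<phi> = "rat_curve_point N num den"
  have "\<exists>pp kp qq kq. \<forall>s. poly den s \<noteq> 0 \<longrightarrow>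
      P j (?\<phi> s) = poly pp s / poly den s ^ kp \<and> Q j (?\<phi> s) = poly qq s / poly den s ^ kq"
    if j: "j < r" for j
  proof -
    obtain pp kp where "\<And>s. poly den s \<noteq> 0 \<Longrightarrow> P j (?\<phi> s) = poly pp s / poly den s ^ kp"
      using polyfun_of_rat_curve_point[OF P[OF j], where den=den and num=num] by blast
    moreover obtain qq kq where "\<And>s. poly den s \<noteq> 0 \<Longrightarrow> Q j (?\<phi> s) = poly qq s / poly den s ^ kq"
      using polyfun_of_rat_curve_point[OF Q[OF j], where den=den and num=num] by blast
    ultimately show ?thesis by blast
  qed
  then obtain pp kp qq kq where rep: "\<And>j s. j < r \<Longrightarrow> poly den s \<noteq> 0 \<Longrightarrow>
      P j (?\<phi> s) = poly (pp j) s / poly den s ^ kp j \<and> Q j (?\<phi> s) = poly (qq j) s / poly den s ^ kq j"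
    by metis
  obtain num' den' where
    den': "\<And>s. poly den' s \<noteq> 0 \<longleftrightarrow> poly den s \<noteq> 0 \<and> (\<forall>j<r. poly (qq j * den ^ kp j) s \<noteq> 0)"
    and num': "\<And>s j. poly den' s \<noteq> 0 \<Longrightarrow> j < r \<Longrightarrow>
      poly (num' j) s / poly den' s = poly (pp j * den ^ kq j) s / poly (qq j * den ^ kp j) s"
    by (rule poly_common_denominator[where r=r and c=den and a="\<lambda>j. pp j * den ^ kq j" and b="\<lambda>j. qq j * den ^ kp j"]) blast
  have "poly (qq j * den ^ kp j) s \<noteq> 0 \<longleftrightarrow> Q j (?\<phi> s) \<noteq> 0" if "j < r" "poly den s \<noteq> 0" for j s
    using rep[OF that] that(2) by simp
  then have nonzero: "poly den' s \<noteq> 0 \<longleftrightarrow> poly den s \<noteq> 0 \<and> (\<forall>j<r. Q j (?\<phi> s) \<noteq> 0)" for s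
    using den'[of s] by blast
  have "quotient_point r P Q (?\<phi> s) = rat_curve_point r num' den' s" if "poly den' s \<noteq> 0" for s
  proof
    fix j
    show "quotient_point r P Q (?\<phi> s) j = rat_curve_point r num' den' s j"
      using num'[OF that] rep[of j s] nonzero[of s] that
      by (auto simp: quotient_point_def rat_curve_point_def field_simps)
  qed
  moreover have "{w \<in> ?\<phi> ` {s. poly den s \<noteq> 0}. \<forall>j<r. Q j w \<noteq> 0} = ?\<phi> ` {s. poly den' s \<noteq> 0}"
    using nonzero by blast
  ultimately show ?thesis
    using that[of num' den'] by (simp add: image_image)
qed

lemma subset_zariski_closure:
  assumes "\<forall>x\<in>S. \<forall>j\<ge>N. x j = 0"
  shows "S \<subseteq> zariski_closure N S"
  using assms unfolding zariski_closure_def by auto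

lemma zariski_closure_vanishing:
  assumes "x \<in> zariski_closure N S" "p \<in> polyfun N" "\<forall>s\<in>S. p s = 0"
  shows "p x = 0"
  using assms unfolding zariski_closure_def by auto

lemma rational_curveE:
  assumes "rational_curve N V"
  obtains num den where "V = zariski_closure N (rat_curve_point N num den ` {s. poly den s \<noteq> 0})"
  using assms unfolding rational_curve_def rat_curve_point_def setcompr_eq_image by blast

lemma rational_curve_of_nonconstant_coordinate:
  assumes V: "V = zariski_closure N (rat_curve_point N num den ` {s. poly den s \<noteq> 0})"
    and j: "j < N" and nonconst: "\<And>c. \<exists>x\<in>V. x j \<noteq> c"
  shows "rational_curve N V"
proof -
  have "\<exists>s1 s2. poly den s1 \<noteq> 0 \<and> poly den s2 \<noteq> 0 \<and>
      rat_curve_point N num den s1 j \<noteq> rat_curve_point N num den s2 j"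
  proof (rule ccontr)
    assume const_coord: "\<not> ?thesis"
    define c where "c = rat_curve_point N num den (SOME s. poly den s \<noteq> 0) j"
    have "\<forall>x\<in>rat_curve_point N num den ` {s. poly den s \<noteq> 0}. x j - c = 0"
      using const_coord someI[of "\<lambda>s. poly den s \<noteq> 0"] by (auto simp: c_def)
    moreover have "(\<lambda>x. x j - c) \<in> polyfun N"
      using j by (intro polyfun_diff polyfun.intros)
    ultimately have "x j - c = 0" if "x \<in> V" for x
      using zariski_closure_vanishing that unfolding V by blast
    with nonconst[of c] show False by auto
  qed
  then obtain s1 s2 where s: "poly den s1 \<noteq> 0" "poly den s2 \<noteq> 0"
    "poly (num j) s1 / poly den s1 \<noteq> poly (num j) s2 / poly den s2"
    using j by (auto simp: rat_curve_point_def)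
  moreover have "den \<noteq> 0"
    using s(1) by auto
  moreover have "V = zariski_closure N
      {(\<lambda>j. if j < N then poly (num j) s / poly den s else 0) | s. poly den s \<noteq> 0}"
    unfolding V rat_curve_point_def[abs_def] setcompr_eq_image ..
  ultimately show ?thesis
    unfolding rational_curve_def using j by blast
qed

lemma zariski_closure_eq_iff:
  assumes "\<forall>x\<in>S. \<forall>j\<ge>N. x j = 0" "\<forall>x\<in>S'. \<forall>j\<ge>N. x j = 0"
  shows "zariski_closure N S = zariski_closure N S' \<longleftrightarrow>
    (\<forall>p\<in>polyfun N. (\<forall>s\<in>S. p s = 0) \<longleftrightarrow> (\<forall>s\<in>S'. p s = 0))"
proof
  assume "zariski_closure N S = zariski_closure N S'"
  then show "\<forall>p\<in>polyfun N. (\<forall>s\<in>S. p s = 0) \<longleftrightarrow> (\<forall>s\<in>S'. p s = 0)"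
    using subset_zariski_closure[OF assms(1)] subset_zariski_closure[OF assms(2)]
    by (metis subsetD zariski_closure_vanishing)
qed (auto simp: zariski_closure_def)

text \<open>Clearing the denominators of the quotients turns a polynomial vanishing on the image
  into the polynomial \<open>h * \<Prod>j<r. Q j\<close> vanishing on the whole source set.\<close>
lemma zariski_closure_quotient_image_eq:
  assumes P: "\<And>j. j < r \<Longrightarrow> P j \<in> polyfun M" and Q: "\<And>j. j < r \<Longrightarrow> Q j \<in> polyfun M"
    and same: "\<And>h. h \<in> polyfun M \<Longrightarrow> (\<forall>w\<in>S. h w = 0) \<longleftrightarrow> (\<forall>w\<in>S'. h w = 0)"
  shows "zariski_closure r (quotient_point r P Q ` {w\<in>S. \<forall>j<r. Q j w \<noteq> 0})
       = zariski_closure r (quotient_point r P Q ` {w\<in>S'. \<forall>j<r. Q j w \<noteq> 0})"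
proof -
  have "(\<forall>x\<in>quotient_point r P Q ` {w\<in>S. \<forall>j<r. Q j w \<noteq> 0}. g x = 0) \<longleftrightarrow>
        (\<forall>x\<in>quotient_point r P Q ` {w\<in>S'. \<forall>j<r. Q j w \<noteq> 0}. g x = 0)" if g_poly: "g \<in> polyfun r" for g
  proof -
    obtain h k where h: "h \<in> polyfun M"
      and g: "\<And>w. (\<forall>j<r. Q j w \<noteq> 0) \<Longrightarrow> g (quotient_point r P Q w) = h w / (\<Prod>j<r. Q j w) ^ k"
      using polyfun_of_quotient_point[where P=P and Q=Q, OF P Q g_poly] by blast
    have vanish: "(\<forall>x\<in>quotient_point r P Q ` {w\<in>T. \<forall>j<r. Q j w \<noteq> 0}. g x = 0) \<longleftrightarrow>
        (\<forall>w\<in>T. h w * (\<Prod>j<r. Q j w) = 0)" for T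
      using g by auto
    have "(\<lambda>w. h w * (\<Prod>j<r. Q j w)) \<in> polyfun M"
      using h Q by (auto intro!: polyfun.pf_mult polyfun_prod)
    then show ?thesis
      unfolding vanish by (rule same)
  qed
  then show ?thesis
    unfolding zariski_closure_def by auto
qed

lemma holomorphic_mult_eq_0_imp_eq_0:
  fixes f g :: "complex \<Rightarrow> complex"
  assumes "open U" "connected U" "f holomorphic_on U" "g holomorphic_on U"
    and "\<And>t. t \<in> U \<Longrightarrow> f t * g t = 0" and "t0 \<in> U" "g t0 \<noteq> 0" and "t \<in> U"
  shows "f t = 0"
proof -
  define V where "V = U \<inter> g -` (- {0})"
  have "open V"
    unfolding V_def using assms(1,4)
    by (intro continuous_open_preimage holomorphic_on_imp_continuous_on) auto
  then show ?thesis
    using analytic_continuation_open[of V U f "\<lambda>_. 0" t] assms by (auto simp: V_def)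
qed

lemma holomorphic_prod_not_identically_zero:
  fixes f :: "'i \<Rightarrow> complex \<Rightarrow> complex"
  assumes "open U" "connected U" "U \<noteq> {}" "finite I"
    and "\<And>i. i \<in> I \<Longrightarrow> f i holomorphic_on U" "\<And>i. i \<in> I \<Longrightarrow> \<exists>t\<in>U. f i t \<noteq> 0"
  shows "\<exists>t\<in>U. (\<Prod>i\<in>I. f i t) \<noteq> 0"
  using assms(4-)
proof (induction I rule: finite_induct)
  case empty
  then show ?case using assms(3) by auto
next
  case (insert i I)
  then obtain t0 where t0: "t0 \<in> U" "(\<Prod>i\<in>I. f i t0) \<noteq> 0" by auto
  obtain t1 where t1: "t1 \<in> U" "f i t1 \<noteq> 0" using insert.prems(2) by blast
  have "f i t1 = 0" if "\<forall>t\<in>U. f i t * (\<Prod>i\<in>I. f i t) = 0"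
    by (rule holomorphic_mult_eq_0_imp_eq_0[OF assms(1,2), of "f i" "\<lambda>t. \<Prod>i\<in>I. f i t" t0])
      (use insert t0 t1 that in \<open>auto intro!: holomorphic_intros\<close>)
  then obtain t where "t \<in> U" "f i t * (\<Prod>i\<in>I. f i t) \<noteq> 0"
    using t1 by blast
  then show ?case
    using insert.hyps by (metis prod.insert)
qed

lemma tower_point_holomorphic_on:
  assumes "radical_tower U m \<delta> e" "p \<in> polyfun (Suc m)"
  shows "(\<lambda>t. p (tower_point m \<delta> t)) holomorphic_on U"
proof (rule polyfun_holomorphic_on[OF assms(2)])
  fix j assume "j < Suc m"
  then have "(\<lambda>t. tower_point m \<delta> t j) = (if j = 0 then (\<lambda>t. t) else \<delta> j)"
    by (auto simp: tower_point_def)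
  then show "(\<lambda>t. tower_point m \<delta> t j) holomorphic_on U"
    using assms(1) \<open>j < Suc m\<close> by (auto simp: radical_tower_def)
qed

text \<open>If the entry with non-zero derivative were constant where all denominators are
  non-zero, then \<open>P j - c Q j\<close> would vanish there, hence on all of \<open>U\<close> since the product
  of the denominators is not identically zero, making the entry locally constant.\<close>
lemma radical_param_entry_nonconstant:
  assumes tower: "radical_tower U m \<delta> e" and param: "radical_param U m \<delta> r P Q"
  obtains j where "j < r"
    "\<And>c. \<exists>t\<in>U. (\<forall>i<r. Q i (tower_point m \<delta> t) \<noteq> 0) \<and> param_entry m \<delta> P Q j t \<noteq> c"
proof -
  let ?tp = "tower_point m \<delta>"
  have U: "open U" "connected U" "U \<noteq> {}"
    using tower by (auto simp: radical_tower_def)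
  obtain j t0 where j: "j < r" and t0: "t0 \<in> U" "Q j (?tp t0) \<noteq> 0"
    and deriv: "deriv (param_entry m \<delta> P Q j) t0 \<noteq> 0"
    using param by (auto simp: radical_param_def)
  have P: "P i \<in> polyfun (Suc m)" and Q: "Q i \<in> polyfun (Suc m)"
    and Q_nonzero: "\<exists>t\<in>U. Q i (?tp t) \<noteq> 0" if "i < r" for i
    using param that by (auto simp: radical_param_def)
  have prod_Q: "(\<lambda>w. \<Prod>i<r. Q i w) \<in> polyfun (Suc m)"
    using Q by (auto intro: polyfun_prod)
  obtain t1 where t1: "t1 \<in> U" "(\<Prod>i<r. Q i (?tp t1)) \<noteq> 0"
    using holomorphic_prod_not_identically_zero[OF U, of "{..<r}" "\<lambda>i t. Q i (?tp t)"]
      tower_point_holomorphic_on[OF tower Q] Q_nonzero by auto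
  have "\<exists>t\<in>U. (\<forall>i<r. Q i (?tp t) \<noteq> 0) \<and> param_entry m \<delta> P Q j t \<noteq> c" for c
  proof (rule ccontr)
    assume "\<not> ?thesis"
    then have const: "P j (?tp t) / Q j (?tp t) = c" if "t \<in> U" "(\<Prod>i<r. Q i (?tp t)) \<noteq> 0" for t
      using that by (auto simp: param_entry_def)
    have zero: "P j (?tp t) - c * Q j (?tp t) = 0" if "t \<in> U" for t
    proof (rule holomorphic_mult_eq_0_imp_eq_0[where g="\<lambda>t. \<Prod>i<r. Q i (?tp t)", OF U(1,2) _ _ _ t1 that])
      show "(\<lambda>t. P j (?tp t) - c * Q j (?tp t)) holomorphic_on U"
        using tower_point_holomorphic_on[OF tower polyfun_diff[OF P polyfun.pf_mult[OF polyfun.pf_const Q]]] j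
        by simp
      show "(\<lambda>t. \<Prod>i<r. Q i (?tp t)) holomorphic_on U"
        using tower_point_holomorphic_on[OF tower prod_Q] .
      show "(P j (?tp t) - c * Q j (?tp t)) * (\<Prod>i<r. Q i (?tp t)) = 0" if "t \<in> U" for t
        using const[OF that] j by (cases "(\<Prod>i<r. Q i (?tp t)) = 0") (auto simp: field_simps)
    qed
    have "open {t \<in> U. Q j (?tp t) \<noteq> 0}"
      using continuous_open_preimage[OF holomorphic_on_imp_continuous_on[OF
          tower_point_holomorphic_on[OF tower Q[OF j]]] U(1), of "- {0}"]
      by (simp add: vimage_def Int_def open_Compl)
    moreover have "param_entry m \<delta> P Q j t = c" if "t \<in> U" "Q j (?tp t) \<noteq> 0" for t
      using zero[OF that(1)] that(2) by (simp add: param_entry_def field_simps)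
    ultimately have "eventually (\<lambda>t. param_entry m \<delta> P Q j t = c) (nhds t0)"
      using t0 unfolding eventually_nhds by blast
    then have "deriv (param_entry m \<delta> P Q j) t0 = deriv (\<lambda>_. c) t0"
      by (rule deriv_cong_ev) simp
    with deriv show False by simp
  qed
  with j that show ?thesis by blast
qed

lemma radical_variety_eq:
  "radical_variety U m \<delta> r P Q =
     zariski_closure r (quotient_point r P Q ` {w \<in> tower_point m \<delta> ` U. \<forall>j<r. Q j w \<noteq> 0})"
  unfolding radical_variety_def param_entry_def quotient_point_def
  by (rule arg_cong[where f="zariski_closure r"]) auto

lemma radical_variety_coordinate_nonconstant:
  assumes "radical_tower U m \<delta> e" "radical_param U m \<delta> r P Q"
  obtains j where "j < r" "\<And>c. \<exists>x\<in>radical_variety U m \<delta> r P Q. x j \<noteq> c"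
proof -
  obtain j where j: "j < r" and nonconst:
    "\<And>c. \<exists>t\<in>U. (\<forall>i<r. Q i (tower_point m \<delta> t) \<noteq> 0) \<and> param_entry m \<delta> P Q j t \<noteq> c"
    using radical_param_entry_nonconstant[OF assms] by blast
  have "quotient_point r P Q (tower_point m \<delta> t) \<in> radical_variety U m \<delta> r P Q"
    if "t \<in> U" "\<forall>i<r. Q i (tower_point m \<delta> t) \<noteq> 0" for t
    unfolding radical_variety_eq using that
    by (intro subsetD[OF subset_zariski_closure]) (auto simp: quotient_point_def)
  moreover have "quotient_point r P Q (tower_point m \<delta> t) j = param_entry m \<delta> P Q j t" for t
    using j by (simp add: quotient_point_def param_entry_def)
  ultimately show ?thesis
    using that[OF j] nonconst by metis
qed

theorem theorem4p9:
  fixes U :: "complex set" and m r :: nat and \<delta> :: "nat \<Rightarrow> complex \<Rightarrow> complex"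
    and e :: "nat \<Rightarrow> nat" and P Q :: "nat \<Rightarrow> (nat \<Rightarrow> complex) \<Rightarrow> complex"
  assumes "radical_tower U m \<delta> e"
    and "rational_curve (Suc m) (tower_variety U m \<delta>)"
    and "radical_param U m \<delta> r P Q"
  shows "rational_curve r (radical_variety U m \<delta> r P Q)"
proof -
  let ?V = "radical_variety U m \<delta> r P Q"
  have P: "\<And>j. j < r \<Longrightarrow> P j \<in> polyfun (Suc m)" and Q: "\<And>j. j < r \<Longrightarrow> Q j \<in> polyfun (Suc m)"
    using assms(3) by (auto simp: radical_param_def)
  obtain num den where "zariski_closure (Suc m) (tower_point m \<delta> ` U)
      = zariski_closure (Suc m) (rat_curve_point (Suc m) num den ` {s. poly den s \<noteq> 0})"
    using rational_curveE[OF assms(2)] unfolding tower_variety_def by blast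
  then have same_vanishing: "\<And>h. h \<in> polyfun (Suc m) \<Longrightarrow> (\<forall>w\<in>tower_point m \<delta> ` U. h w = 0)
      \<longleftrightarrow> (\<forall>w\<in>rat_curve_point (Suc m) num den ` {s. poly den s \<noteq> 0}. h w = 0)"
    by (subst (asm) zariski_closure_eq_iff) (auto simp: tower_point_def rat_curve_point_def)
  obtain num' den' where "quotient_point r P Q ` {w \<in> rat_curve_point (Suc m) num den ` {s. poly den s \<noteq> 0}.
      \<forall>j<r. Q j w \<noteq> 0} = rat_curve_point r num' den' ` {s. poly den' s \<noteq> 0}"
    using quotient_point_rat_curve_image[where num=num and den=den] P Q by blast
  moreover have "zariski_closure r (quotient_point r P Q ` {w \<in> tower_point m \<delta> ` U. \<forall>j<r. Q j w \<noteq> 0})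
      = zariski_closure r (quotient_point r P Q `
          {w \<in> rat_curve_point (Suc m) num den ` {s. poly den s \<noteq> 0}. \<forall>j<r. Q j w \<noteq> 0})"
    by (rule zariski_closure_quotient_image_eq) (fact P Q same_vanishing)+
  ultimately have "?V = zariski_closure r (rat_curve_point r num' den' ` {s. poly den' s \<noteq> 0})"
    by (simp add: radical_variety_eq)
  moreover obtain j where "j < r" and "\<And>c. \<exists>x\<in>?V. x j \<noteq> c"
    using radical_variety_coordinate_nonconstant[OF assms(1,3)] by blast
  ultimately show ?thesis
    by (rule rational_curve_of_nonconstant_coordinate)
qed

end
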